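(* The group of units $U(\Pi_2)$ of $\Pi_2=\langle a,b,c\mid (ab^ic)^2=1\ (i\geq 1)\rangle$ is isomorphic to the free product of countably infinitely many cyclic groups of order $2$, i.e. to the group $\langle x_i\ (i\geq 1)\mid x_i^2=1\ (i\geq1)\rangle$, via $ab^ic\mapsto x_i$. In particular, $U(\Pi_2)$ is not finitely generated.
   Context: The group of units $U(M)$ of a monoid $M$ is the set of elements having both a left and a right inverse. *)

theory Defs
  imports "HOL-Algebra.Algebra"
begin

inductive_set pres_rel :: "'a set \<Rightarrow> ('a list \<times> 'a list) set \<Rightarrow> ('a list \<times> 'a list) set"
  for S R where
    refl: "w \<in> lists S \<Longrightarrow> (w, w) \<in> pres_rel S R"
  | rel: "(l, r) \<in> R \<Longrightarrow> u \<in> lists S \<Longrightarrow> v \<in> lists S \<Longrightarrow>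
          (u @ l @ v, u @ r @ v) \<in> pres_rel S R"
  | sym: "(w, w') \<in> pres_rel S R \<Longrightarrow> (w', w) \<in> pres_rel S R"
  | trans: "(w, w') \<in> pres_rel S R \<Longrightarrow> (w', w'') \<in> pres_rel S R \<Longrightarrow> (w, w'') \<in> pres_rel S R"

definition pres_class :: "'a set \<Rightarrow> ('a list \<times> 'a list) set \<Rightarrow> 'a list \<Rightarrow> 'a list set" where
  "pres_class S R w = pres_rel S R `` {w}"

definition pres_monoid :: "'a set \<Rightarrow> ('a list \<times> 'a list) set \<Rightarrow> 'a list set monoid" where
  "pres_monoid S R =
     \<lparr> carrier = lists S // pres_rel S R,
       Group.monoid.mult = (\<lambda>U V. pres_rel S R `` {x @ y | x y. x \<in> U \<and> y \<in> V}),
       Group.monoid.one = pres_class S R [] \<rparr>"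

datatype gen = ga | gb | gc

definition word_abic :: "nat \<Rightarrow> gen list" where
  "word_abic i = ga # replicate i gb @ [gc]"

definition Pi2_rels :: "(gen list \<times> gen list) set" where
  "Pi2_rels = {(word_abic i @ word_abic i, []) | i. i \<ge> 1}"

definition Pi2 :: "gen list set monoid" where
  "Pi2 = pres_monoid UNIV Pi2_rels"

text \<open>\<open>\<langle>x\<^sub>i (i \<ge> 1) | x\<^sub>i^2 = 1 (i \<ge> 1)\<rangle>\<close>: generator x_i is the letter i.\<close>
definition Xgens :: "nat set" where "Xgens = {i. i \<ge> 1}"

definition X_rels :: "(nat list \<times> nat list) set" where
  "X_rels = {([i, i], []) | i. i \<ge> 1}"

definition FreeProdZ2 :: "nat list set monoid" where
  "FreeProdZ2 = pres_monoid Xgens X_rels"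

end

theory Submission
  imports Defs
begin

text \<open>Orienting the relators \<open>(ab\<^sup>ic)\<^sup>2 \<rightarrow> 1\<close> gives a complete rewriting system: two relators
  can only overlap in \<open>(ab\<^sup>ic)\<^sup>3\<close>, which reduces to \<open>ab\<^sup>ic\<close> either way. Its normal forms,
  computed by a stack, solve the word problem of \<open>\<Pi>\<^sub>2\<close>. If a reduced word \<open>z\<close> represents a unit
  with reduced inverse \<open>v\<close>, then \<open>vz\<close> reduces to \<open>1\<close>, so a relator straddles \<open>v\<close> and \<open>z\<close>;
  as \<open>z\<close> must begin with \<open>a\<close>, this forces \<open>z = ab\<^sup>ic y\<close> with \<open>y\<close> again a unit. So the units are
  the products of the involutions \<open>ab\<^sup>ic\<close>, and these satisfy no further relations because reduced
  words in the \<open>x\<^sub>i\<close> (no two equal neighbours) map to reduced words of \<open>\<Pi>\<^sub>2\<close>. Finitely many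
  units involve only indices \<open>i \<le> N\<close>, and the subgroup they generate misses \<open>ab\<^sup>N\<^sup>+\<^sup>1c\<close>.\<close>

section \<open>Presented monoids\<close>

locale presentation =
  fixes S :: "'a set" and R :: "('a list \<times> 'a list) set"
  assumes relators_in_lists: "R \<subseteq> lists S \<times> lists S"
begin

abbreviation rel :: "('a list \<times> 'a list) set" where "rel \<equiv> pres_rel S R"
abbreviation cls :: "'a list \<Rightarrow> 'a list set" where "cls \<equiv> pres_class S R"

lemma pres_rel_lists: "(w, w') \<in> rel \<Longrightarrow> w \<in> lists S \<and> w' \<in> lists S"
  by (induction rule: pres_rel.induct) (use relators_in_lists in auto)

lemma pres_rel_append_cong:
  assumes "(w, w') \<in> rel" "u \<in> lists S" "v \<in> lists S"
  shows "(u @ w @ v, u @ w' @ v) \<in> rel"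
  using assms
proof (induction rule: pres_rel.induct)
  case (refl w)
  then show ?case by (intro pres_rel.refl) simp
next
  case (rel l r u' v')
  then show ?case
    using pres_rel.rel[of l r R "u @ u'" S "v' @ v"] by simp
qed (auto intro: pres_rel.sym pres_rel.trans)

lemma pres_rel_append:
  assumes "(u, u') \<in> rel" "(v, v') \<in> rel"
  shows "(u @ v, u' @ v') \<in> rel"
proof -
  have "(u @ v, u' @ v) \<in> rel"
    using pres_rel_append_cong[OF assms(1), of "[]" v] pres_rel_lists[OF assms(2)] by simp
  moreover have "(u' @ v, u' @ v') \<in> rel"
    using pres_rel_append_cong[OF assms(2), of u' "[]"] pres_rel_lists[OF assms(1)] by simp
  ultimately show ?thesis by (rule pres_rel.trans)
qed

lemma equiv_pres_rel: "equiv (lists S) rel"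
  unfolding equiv_def refl_on_def sym_def trans_def
  using pres_rel_lists by (auto intro: pres_rel.refl pres_rel.sym pres_rel.trans)

lemma pres_class_eq_iff:
  "u \<in> lists S \<Longrightarrow> v \<in> lists S \<Longrightarrow> cls u = cls v \<longleftrightarrow> (u, v) \<in> rel"
  unfolding pres_class_def using equiv_pres_rel by (simp add: equiv_class_eq_iff)

lemma carrier_pres_monoid: "carrier (pres_monoid S R) = cls ` lists S"
  unfolding pres_monoid_def pres_class_def quotient_def by auto

lemma one_pres_monoid: "\<one>\<^bsub>pres_monoid S R\<^esub> = cls []"
  unfolding pres_monoid_def by simp

lemma mult_pres_class:
  assumes "u \<in> lists S" "v \<in> lists S"
  shows "cls u \<otimes>\<^bsub>pres_monoid S R\<^esub> cls v = cls (u @ v)"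
proof -
  have "{x @ y | x y. x \<in> cls u \<and> y \<in> cls v} \<subseteq> cls (u @ v)"
    unfolding pres_class_def by (auto intro: pres_rel_append)
  moreover have "u @ v \<in> {x @ y | x y. x \<in> cls u \<and> y \<in> cls v}"
    unfolding pres_class_def using assms by (auto intro: pres_rel.refl)
  ultimately have "rel `` {x @ y | x y. x \<in> cls u \<and> y \<in> cls v} = cls (u @ v)"
    unfolding pres_class_def using equiv_pres_rel
    by (auto dest: equivE intro: pres_rel.trans pres_rel.sym)
  then show ?thesis unfolding pres_monoid_def by simp
qed

lemma monoid_pres_monoid: "monoid (pres_monoid S R)"
proof (rule monoidI)
  fix x y z assume "x \<in> carrier (pres_monoid S R)" "y \<in> carrier (pres_monoid S R)"
    "z \<in> carrier (pres_monoid S R)"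
  then obtain u v w where "u \<in> lists S" "v \<in> lists S" "w \<in> lists S" "x = cls u" "y = cls v" "z = cls w"
    by (auto simp: carrier_pres_monoid)
  then show "x \<otimes>\<^bsub>pres_monoid S R\<^esub> y \<in> carrier (pres_monoid S R)"
    and "x \<otimes>\<^bsub>pres_monoid S R\<^esub> y \<otimes>\<^bsub>pres_monoid S R\<^esub> z =
      x \<otimes>\<^bsub>pres_monoid S R\<^esub> (y \<otimes>\<^bsub>pres_monoid S R\<^esub> z)"
    and "\<one>\<^bsub>pres_monoid S R\<^esub> \<otimes>\<^bsub>pres_monoid S R\<^esub> x = x"
    and "x \<otimes>\<^bsub>pres_monoid S R\<^esub> \<one>\<^bsub>pres_monoid S R\<^esub> = x"
    by (simp_all add: carrier_pres_monoid one_pres_monoid mult_pres_class)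
qed (auto simp: carrier_pres_monoid one_pres_monoid)

end

interpretation Pi2: presentation UNIV Pi2_rels
  by unfold_locales simp

interpretation X: presentation Xgens X_rels
  by unfold_locales (auto simp: X_rels_def Xgens_def)

section \<open>A complete rewriting system for \<open>\<Pi>\<^sub>2\<close>\<close>

definition relator :: "nat \<Rightarrow> gen list" where
  "relator i = word_abic i @ word_abic i"

definition Pi2_reduced :: "gen list \<Rightarrow> bool" where
  "Pi2_reduced w \<longleftrightarrow> \<not> (\<exists>x y i. 1 \<le> i \<and> w = x @ relator i @ y)"

lemma relator_Pi2_rel: "1 \<le> i \<Longrightarrow> (u @ relator i @ v, u @ v) \<in> Pi2.rel"
  using pres_rel.rel[of "relator i" "[]" Pi2_rels u UNIV v]
  by (auto simp: Pi2_rels_def relator_def)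

lemma replicate_gb_Cons_eq:
  "replicate i gb @ z # u = replicate j gb @ z' # u' \<Longrightarrow> z \<noteq> gb \<Longrightarrow> z' \<noteq> gb \<Longrightarrow>
    i = j \<and> z = z' \<and> u = u'"
proof (induction i arbitrary: j)
  case 0
  then show ?case by (cases j) auto
next
  case (Suc i)
  then show ?case by (cases j) auto
qed

lemma append_word_abic_eq:
  assumes "x @ word_abic i = y @ word_abic j"
  shows "i = j \<and> x = y"
proof -
  from assms have "rev (x @ word_abic i) = rev (y @ word_abic j)" by simp
  then have "replicate i gb @ ga # rev x = replicate j gb @ ga # rev y"
    by (simp add: word_abic_def)
  from replicate_gb_Cons_eq[OF this] show ?thesis by simp
qed

lemma append_relator_eq:
  assumes "x @ relator i = y @ relator j"
  shows "i = j \<and> x = y"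
  using assms append_word_abic_eq[of "x @ word_abic i" i "y @ word_abic j" j]
    append_word_abic_eq[of x i y j]
  by (simp add: relator_def)

lemma relator_ne_Nil: "relator i \<noteq> []"
  and last_relator: "last (relator i) = gc"
  by (auto simp: relator_def word_abic_def)

lemma Pi2_reduced_Nil: "Pi2_reduced []"
  unfolding Pi2_reduced_def using relator_ne_Nil by auto

lemma Pi2_reduced_appendD:
  "Pi2_reduced (u @ v) \<Longrightarrow> Pi2_reduced u"
  "Pi2_reduced (u @ v) \<Longrightarrow> Pi2_reduced v"
  unfolding Pi2_reduced_def by (metis append.assoc)+

lemma Pi2_reduced_snoc_relator:
  assumes "Pi2_reduced t" "t @ [y] = x @ relator i @ z" "1 \<le> i"
  shows "z = []"
proof (rule ccontr)
  assume "z \<noteq> []"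
  then obtain z' where "z = z' @ [last z]" by (metis append_butlast_last_id)
  with assms(2) have "t = x @ relator i @ z'" by (metis append.assoc append1_eq_conv)
  with assms show False unfolding Pi2_reduced_def by blast
qed

lemma Pi2_reduced_append_no_gc:
  "Pi2_reduced w \<Longrightarrow> gc \<notin> set u \<Longrightarrow> Pi2_reduced (w @ u)"
proof (induction u rule: rev_induct)
  case (snoc y u)
  show ?case unfolding Pi2_reduced_def
  proof
    assume "\<exists>x z i. 1 \<le> i \<and> w @ u @ [y] = x @ relator i @ z"
    then obtain x z i where "1 \<le> i" "(w @ u) @ [y] = x @ relator i @ z" by auto
    with Pi2_reduced_snoc_relator[of "w @ u"] snoc have "(w @ u) @ [y] = x @ relator i" by auto
    then have "y = gc" using last_relator relator_ne_Nil by (metis last_appendR last_snoc)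
    with snoc.prems show False by simp
  qed
qed simp

definition Pi2_push :: "gen \<Rightarrow> gen list \<Rightarrow> gen list" where
  "Pi2_push y s = (if \<exists>x i. 1 \<le> i \<and> s @ [y] = x @ relator i
     then THE x. \<exists>i. 1 \<le> i \<and> s @ [y] = x @ relator i else s @ [y])"

definition Pi2_nf :: "gen list \<Rightarrow> gen list" where
  "Pi2_nf w = fold Pi2_push w []"

lemma Pi2_push_relator:
  assumes "s @ [y] = x @ relator i" "1 \<le> i"
  shows "Pi2_push y s = x"
proof -
  have "(THE x. \<exists>i. 1 \<le> i \<and> s @ [y] = x @ relator i) = x"
    using assms append_relator_eq by (intro the_equality) (blast, metis)
  then show ?thesis using assms unfolding Pi2_push_def by auto
qed

lemma Pi2_push_reduced: "Pi2_reduced (s @ [y]) \<Longrightarrow> Pi2_push y s = s @ [y]"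
  unfolding Pi2_push_def Pi2_reduced_def by (metis append_Nil2)

lemma fold_Pi2_push_reduced: "Pi2_reduced (s @ t) \<Longrightarrow> fold Pi2_push t s = s @ t"
proof (induction t arbitrary: s)
  case (Cons y t)
  then have "Pi2_push y s = s @ [y]"
    using Pi2_reduced_appendD(1)[of "s @ [y]" t] by (simp add: Pi2_push_reduced)
  then show ?case using Cons by simp
qed simp

lemma Pi2_reduced_Pi2_push:
  assumes "Pi2_reduced s"
  shows "Pi2_reduced (Pi2_push y s)"
proof (cases "\<exists>x i. 1 \<le> i \<and> s @ [y] = x @ relator i")
  case True
  then obtain x i where xi: "1 \<le> i" "s @ [y] = x @ relator i" by blast
  obtain r where "relator i = r @ [y]"
    using xi(2) relator_ne_Nil by (metis append_butlast_last_id append_is_Nil_conv last_appendR last_snoc)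
  with xi assms show ?thesis
    by (metis Pi2_push_relator Pi2_reduced_appendD(1) append.assoc append1_eq_conv)
next
  case False
  have "Pi2_reduced (s @ [y])"
    unfolding Pi2_reduced_def
  proof
    assume "\<exists>x z i. 1 \<le> i \<and> s @ [y] = x @ relator i @ z"
    then obtain x z i where xz: "1 \<le> i" "s @ [y] = x @ relator i @ z" by blast
    moreover have "z = []" using Pi2_reduced_snoc_relator[OF assms xz(2,1)] .
    ultimately show False using False by auto
  qed
  then show ?thesis by (simp add: Pi2_push_reduced)
qed

lemma Pi2_reduced_fold_Pi2_push: "Pi2_reduced s \<Longrightarrow> Pi2_reduced (fold Pi2_push t s)"
  by (induction t arbitrary: s) (auto simp: Pi2_reduced_Pi2_push)

lemma Pi2_reduced_Pi2_nf: "Pi2_reduced (Pi2_nf w)"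
  unfolding Pi2_nf_def by (simp add: Pi2_reduced_fold_Pi2_push Pi2_reduced_Nil)

lemma Pi2_nf_reduced: "Pi2_reduced w \<Longrightarrow> Pi2_nf w = w"
  unfolding Pi2_nf_def using fold_Pi2_push_reduced[of "[]" w] by simp

lemma Pi2_nf_append: "Pi2_nf (u @ v) = fold Pi2_push v (Pi2_nf u)"
  unfolding Pi2_nf_def by simp

text \<open>This is local confluence at the overlap \<open>(ab\<^sup>ic)\<^sup>3\<close>: if \<open>s\<close> ends in \<open>ab\<^sup>ic\<close>, the first copy
  of \<open>ab\<^sup>ic\<close> cancels it and the second one restores it.\<close>

lemma fold_Pi2_push_relator:
  assumes "Pi2_reduced s" "1 \<le> i"
  shows "fold Pi2_push (relator i) s = s"
proof -
  let ?p = "ga # replicate i gb"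
  have w: "word_abic i = ?p @ [gc]" by (simp add: word_abic_def)
  have push_p: "fold Pi2_push ?p t = t @ ?p" if "Pi2_reduced t" for t
    using that by (intro fold_Pi2_push_reduced Pi2_reduced_append_no_gc) auto
  have push_w: "fold Pi2_push (word_abic i) t = Pi2_push gc (t @ ?p)" if "Pi2_reduced t" for t
    using push_p[OF that] by (simp add: w)
  show ?thesis
  proof (cases "\<exists>x. s = x @ word_abic i")
    case True
    then obtain x where x: "s = x @ word_abic i" by blast
    have "Pi2_push gc (s @ ?p) = x"
      by (rule Pi2_push_relator[OF _ assms(2)]) (simp add: x relator_def w)
    then have "fold Pi2_push (word_abic i) s = x"
      using push_w[OF assms(1)] by simp
    moreover have "fold Pi2_push (word_abic i) x = s"
      using assms(1) x by (simp add: fold_Pi2_push_reduced)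
    ultimately show ?thesis by (simp add: relator_def)
  next
    case False
    have reduced: "Pi2_reduced (s @ word_abic i)"
      unfolding Pi2_reduced_def
    proof
      assume "\<exists>x z j. 1 \<le> j \<and> s @ word_abic i = x @ relator j @ z"
      then obtain x z j where j: "1 \<le> j" "(s @ ?p) @ [gc] = x @ relator j @ z"
        by (auto simp: w)
      moreover have "z = []"
        using Pi2_reduced_snoc_relator[OF Pi2_reduced_append_no_gc[OF assms(1)] j(2,1)] by simp
      ultimately have "s @ word_abic i = (x @ word_abic j) @ word_abic j"
        by (simp add: w relator_def)
      with append_word_abic_eq False show False by blast
    qed
    have "fold Pi2_push (word_abic i) s = s @ word_abic i"
      using push_w[OF assms(1)] reduced by (simp add: Pi2_push_reduced w)
    moreover have "Pi2_push gc ((s @ word_abic i) @ ?p) = s"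
      by (rule Pi2_push_relator[OF _ assms(2)]) (simp add: relator_def w)
    then have "fold Pi2_push (word_abic i) (s @ word_abic i) = s"
      using push_w[OF reduced] by simp
    ultimately show ?thesis by (simp add: relator_def)
  qed
qed

lemma Pi2_push_Pi2_rel: "(s @ [y], Pi2_push y s) \<in> Pi2.rel"
proof (cases "\<exists>x i. 1 \<le> i \<and> s @ [y] = x @ relator i")
  case True
  then obtain x i where "1 \<le> i" "s @ [y] = x @ relator i" by blast
  then show ?thesis using relator_Pi2_rel[of i x "[]"] Pi2_push_relator by simp
next
  case False
  then show ?thesis unfolding Pi2_push_def by (auto intro: pres_rel.refl)
qed

lemma Pi2_rel_Pi2_nf: "(w, Pi2_nf w) \<in> Pi2.rel"
proof (induction w rule: rev_induct)
  case Nil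
  then show ?case by (simp add: Pi2_nf_def pres_rel.refl)
next
  case (snoc y w)
  have "(w @ [y], Pi2_nf w @ [y]) \<in> Pi2.rel"
    using Pi2.pres_rel_append_cong[OF snoc, of "[]" "[y]"] by simp
  then show ?case
    using Pi2_push_Pi2_rel by (auto simp: Pi2_nf_def intro: pres_rel.trans)
qed

lemma Pi2_rel_iff: "(w, w') \<in> Pi2.rel \<longleftrightarrow> Pi2_nf w = Pi2_nf w'"
proof
  show "(w, w') \<in> Pi2.rel \<Longrightarrow> Pi2_nf w = Pi2_nf w'"
  proof (induction rule: pres_rel.induct)
    case (rel l r u v)
    then obtain i where "1 \<le> i" "l = relator i" "r = []"
      by (auto simp: Pi2_rels_def relator_def)
    then show ?case
      by (simp add: Pi2_nf_append fold_Pi2_push_relator Pi2_reduced_Pi2_nf)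
  qed auto
  show "Pi2_nf w = Pi2_nf w' \<Longrightarrow> (w, w') \<in> Pi2.rel"
    by (metis Pi2_rel_Pi2_nf pres_rel.sym pres_rel.trans)
qed

lemma Pi2_class_eq_iff: "Pi2.cls u = Pi2.cls v \<longleftrightarrow> Pi2_nf u = Pi2_nf v"
  using Pi2.pres_class_eq_iff Pi2_rel_iff by simp

lemma Pi2_nf_Nil [simp]: "Pi2_nf [] = []"
  by (simp add: Pi2_nf_def)

lemma Pi2_class_Pi2_nf: "Pi2.cls (Pi2_nf w) = Pi2.cls w"
  by (simp add: Pi2_class_eq_iff Pi2_nf_reduced Pi2_reduced_Pi2_nf)

text \<open>The bottom letter of the stack is only removed as the first letter of a relator.\<close>

lemma hd_fold_Pi2_push_Nil:
  "s \<noteq> [] \<Longrightarrow> fold Pi2_push ys s = [] \<Longrightarrow> hd s = ga"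
proof (induction ys arbitrary: s)
  case (Cons y ys)
  show ?case
  proof (cases "\<exists>x i. 1 \<le> i \<and> s @ [y] = x @ relator i")
    case True
    then obtain x i where xi: "1 \<le> i" "s @ [y] = x @ relator i" by blast
    then have "Pi2_push y s = x" by (simp add: Pi2_push_relator)
    with Cons xi show ?thesis
      by (cases "x = []") (auto simp: relator_def word_abic_def hd_append split: if_splits)
  next
    case False
    then have "Pi2_push y s = s @ [y]" unfolding Pi2_push_def by (simp only: if_False)
    with Cons.IH[of "s @ [y]"] Cons.prems show ?thesis by simp
  qed
qed simp

lemma hd_Pi2_nf_Nil: "w \<noteq> [] \<Longrightarrow> Pi2_nf w = [] \<Longrightarrow> hd w = ga"
proof (cases w)
  case (Cons y w')
  moreover have "Pi2_reduced [y]"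
    unfolding Pi2_reduced_def by (auto simp: relator_def word_abic_def Cons_eq_append_conv)
  then have "Pi2_push y [] = [y]" using Pi2_push_reduced[of "[]"] by simp
  moreover assume "Pi2_nf w = []"
  ultimately show ?thesis using hd_fold_Pi2_push_Nil[of "[y]" w'] by (simp add: Pi2_nf_def)
qed simp

lemma replicate_gb_gc_eq_append_ga:
  "replicate k gb @ gc # u = x @ ga # v \<Longrightarrow> \<exists>x'. x = replicate k gb @ gc # x' \<and> u = x' @ ga # v"
proof (induction k arbitrary: x)
  case 0
  then show ?case by (cases x) auto
next
  case (Suc k)
  then show ?case by (cases x) auto
qed

lemma relator_suffix_ga:
  assumes "p @ q = relator i" "p \<noteq> []" "hd q = ga" "q \<noteq> []"
  shows "q = word_abic i"
proof -
  obtain v where q: "q = ga # v" using assms(3,4) by (cases q) auto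
  obtain p' where "p = ga # p'" using assms(1,2) by (cases p) (auto simp: relator_def word_abic_def)
  with assms(1) q have "replicate i gb @ gc # ga # replicate i gb @ [gc] = p' @ ga # v"
    by (simp add: relator_def word_abic_def)
  from replicate_gb_gc_eq_append_ga[OF this]
  obtain x where x: "ga # replicate i gb @ [gc] = x @ ga # v" by blast
  have "x = []"
  proof (rule ccontr)
    assume "x \<noteq> []"
    with x have "ga \<in> set (replicate i gb @ [gc])" by (cases x) auto
    then show False by auto
  qed
  with x q show ?thesis by (simp add: word_abic_def)
qed

lemma relator_straddles:
  assumes "Pi2_reduced v" "Pi2_reduced z" "v @ z = x @ relator i @ y" "1 \<le> i"
  shows "\<exists>p q. p \<noteq> [] \<and> q \<noteq> [] \<and> p @ q = relator i \<and> v = x @ p \<and> z = q @ y"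
proof -
  have not_in: "w \<noteq> x' @ relator i @ y'" if "Pi2_reduced w" for w x' y'
    using that assms(4) unfolding Pi2_reduced_def by blast
  from assms(3) obtain us where
    "(v = x @ us \<and> us @ z = relator i @ y) \<or> (v @ us = x \<and> z = us @ relator i @ y)"
    by (auto simp: append_eq_append_conv2)
  then obtain us where v: "v = x @ us" and us: "us @ z = relator i @ y"
    using not_in[OF assms(2)] by blast
  from us obtain us' where
    "(us = relator i @ us' \<and> us' @ z = y) \<or> (us @ us' = relator i \<and> z = us' @ y)"
    by (auto simp: append_eq_append_conv2)
  then have "us @ us' = relator i" "z = us' @ y"
    using not_in[OF assms(1)] v by auto
  moreover have "us \<noteq> []" "us' \<noteq> []"
    using calculation not_in[OF assms(2), of "[]" y] not_in[OF assms(1), of x "[]"] v by auto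
  ultimately show ?thesis using v by blast
qed

lemma not_Pi2_reduced_append_word_abic_prefix:
  assumes "Pi2_reduced v" "Pi2_reduced z" "\<not> Pi2_reduced (v @ z)" "hd z = ga"
  obtains i y where "1 \<le> i" "z = word_abic i @ y"
proof -
  obtain x y i where xi: "1 \<le> i" "v @ z = x @ relator i @ y"
    using assms(3) unfolding Pi2_reduced_def by blast
  from relator_straddles[OF assms(1,2) xi(2,1)] obtain p q
    where "p \<noteq> []" "q \<noteq> []" "p @ q = relator i" "z = q @ y" by blast
  with relator_suffix_ga assms(4) xi(1) that show ?thesis by auto
qed

section \<open>The units of \<open>\<Pi>\<^sub>2\<close>\<close>

lemma carrier_Pi2: "carrier Pi2 = range Pi2.cls"
  unfolding Pi2_def by (simp add: Pi2.carrier_pres_monoid)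

lemma one_Pi2: "\<one>\<^bsub>Pi2\<^esub> = Pi2.cls []"
  unfolding Pi2_def by (rule Pi2.one_pres_monoid)

lemma mult_Pi2: "Pi2.cls u \<otimes>\<^bsub>Pi2\<^esub> Pi2.cls v = Pi2.cls (u @ v)"
  unfolding Pi2_def by (simp add: Pi2.mult_pres_class)

lemma monoid_Pi2: "monoid Pi2"
  unfolding Pi2_def by (rule Pi2.monoid_pres_monoid)

lemma Pi2_class_eq_one_iff: "Pi2.cls w = \<one>\<^bsub>Pi2\<^esub> \<longleftrightarrow> Pi2_nf w = []"
  by (simp add: one_Pi2 Pi2_class_eq_iff)

lemma word_abic_square_eq_one: "1 \<le> i \<Longrightarrow> Pi2.cls (word_abic i @ word_abic i) = \<one>\<^bsub>Pi2\<^esub>"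
  using relator_Pi2_rel[of i "[]" "[]"] by (simp add: one_Pi2 Pi2.pres_class_eq_iff relator_def)

lemma word_abic_Unit: "1 \<le> i \<Longrightarrow> Pi2.cls (word_abic i) \<in> Units Pi2"
  using word_abic_square_eq_one by (auto simp: Units_def carrier_Pi2 mult_Pi2)

definition word_abics :: "nat list \<Rightarrow> gen list" where
  "word_abics ks = concat (map word_abic ks)"

lemma word_abics_simps [simp]:
  "word_abics [] = []"
  "word_abics (k # ks) = word_abic k @ word_abics ks"
  "word_abics (ks @ js) = word_abics ks @ word_abics js"
  by (auto simp: word_abics_def)

lemma word_abics_Unit: "ks \<in> lists Xgens \<Longrightarrow> Pi2.cls (word_abics ks) \<in> Units Pi2"
proof (induction ks)
  case Nil
  then show ?case using monoid.Units_one_closed[OF monoid_Pi2] by (simp add: one_Pi2)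
next
  case (Cons k ks)
  then show ?case
    unfolding word_abics_simps mult_Pi2[symmetric]
    by (intro monoid.Units_m_closed[OF monoid_Pi2] word_abic_Unit) (auto simp: Xgens_def)
qed

lemma Unit_word_abic_append_cancel:
  assumes "1 \<le> i" "Pi2.cls (word_abic i @ y) \<in> Units Pi2"
  shows "Pi2.cls y \<in> Units Pi2"
proof -
  have "Pi2.cls y = Pi2.cls (word_abic i) \<otimes>\<^bsub>Pi2\<^esub> Pi2.cls (word_abic i @ y)"
    using word_abic_square_eq_one[OF assms(1)] monoid.l_one[OF monoid_Pi2]
    by (metis append.assoc mult_Pi2 rangeI carrier_Pi2)
  with monoid.Units_m_closed[OF monoid_Pi2 word_abic_Unit[OF assms(1)] assms(2)] show ?thesis
    by simp
qed

lemma Pi2_reduced_Unit: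
  "Pi2_reduced z \<Longrightarrow> Pi2.cls z \<in> Units Pi2 \<Longrightarrow> \<exists>ks\<in>lists Xgens. z = word_abics ks"
proof (induction "length z" arbitrary: z rule: less_induct)
  case less
  show ?case
  proof (cases "z = []")
    case True
    then show ?thesis by (intro bexI[of _ "[]"]) auto
  next
    case False
    from less.prems(2) obtain v0 where
      "Pi2.cls v0 \<otimes>\<^bsub>Pi2\<^esub> Pi2.cls z = \<one>\<^bsub>Pi2\<^esub>" "Pi2.cls z \<otimes>\<^bsub>Pi2\<^esub> Pi2.cls v0 = \<one>\<^bsub>Pi2\<^esub>"
      unfolding Units_def carrier_Pi2 by blast
    moreover define v where "v = Pi2_nf v0"
    moreover have "Pi2.cls v0 = Pi2.cls v" by (simp add: v_def Pi2_class_Pi2_nf)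
    ultimately have "Pi2.cls (v @ z) = \<one>\<^bsub>Pi2\<^esub>" "Pi2.cls (z @ v) = \<one>\<^bsub>Pi2\<^esub>"
      by (simp_all only: mult_Pi2)
    then have "Pi2_nf (v @ z) = []" "Pi2_nf (z @ v) = []"
      by (simp_all only: Pi2_class_eq_one_iff)
    have "\<not> Pi2_reduced (v @ z)"
      using \<open>Pi2_nf (v @ z) = []\<close> False Pi2_nf_reduced by fastforce
    moreover have "hd z = ga"
      using hd_Pi2_nf_Nil[OF _ \<open>Pi2_nf (z @ v) = []\<close>] False by simp
    ultimately obtain i y where iy: "1 \<le> i" "z = word_abic i @ y"
      using not_Pi2_reduced_append_word_abic_prefix Pi2_reduced_Pi2_nf less.prems(1) unfolding v_def by blast
    have "Pi2_reduced y" using less.prems(1) iy(2) Pi2_reduced_appendD(2) by blast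
    moreover have "Pi2.cls y \<in> Units Pi2" using Unit_word_abic_append_cancel iy less.prems(2) by simp
    moreover have "length y < length z" using iy by (simp add: word_abic_def)
    ultimately obtain ks where "ks \<in> lists Xgens" "y = word_abics ks"
      using less.hyps by blast
    with iy show ?thesis by (intro bexI[of _ "i # ks"]) (auto simp: Xgens_def)
  qed
qed

lemma Units_Pi2: "Units Pi2 = (\<lambda>ks. Pi2.cls (word_abics ks)) ` lists Xgens"
proof
  show "Units Pi2 \<subseteq> (\<lambda>ks. Pi2.cls (word_abics ks)) ` lists Xgens"
  proof
    fix U assume U: "U \<in> Units Pi2"
    then obtain w where w: "U = Pi2.cls (Pi2_nf w)"
      by (auto simp: Units_def carrier_Pi2 Pi2_class_Pi2_nf)
    with U Pi2_reduced_Unit[OF Pi2_reduced_Pi2_nf] obtain ks where "ks \<in> lists Xgens" "Pi2_nf w = word_abics ks"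
      by blast
    with w show "U \<in> (\<lambda>ks. Pi2.cls (word_abics ks)) ` lists Xgens"
      by auto
  qed
qed (auto intro: word_abics_Unit)

section \<open>Reduced words in the generators \<open>x\<^sub>i\<close>\<close>

lemma carrier_FreeProdZ2: "carrier FreeProdZ2 = X.cls ` lists Xgens"
  unfolding FreeProdZ2_def by (rule X.carrier_pres_monoid)

lemma mult_FreeProdZ2:
  "u \<in> lists Xgens \<Longrightarrow> v \<in> lists Xgens \<Longrightarrow> X.cls u \<otimes>\<^bsub>FreeProdZ2\<^esub> X.cls v = X.cls (u @ v)"
  unfolding FreeProdZ2_def by (rule X.mult_pres_class)

definition X_reduced :: "nat list \<Rightarrow> bool" where
  "X_reduced ks \<longleftrightarrow> \<not> (\<exists>p q k. ks = p @ k # k # q)"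

lemma X_reduced_singleton: "X_reduced [k]"
  unfolding X_reduced_def by (auto simp: Cons_eq_append_conv)

lemma X_reduced_exists:
  "ks \<in> lists Xgens \<Longrightarrow> \<exists>ks'. X_reduced ks' \<and> set ks' \<subseteq> set ks \<and> (ks, ks') \<in> X.rel"
proof (induction "length ks" arbitrary: ks rule: less_induct)
  case less
  show ?case
  proof (cases "X_reduced ks")
    case True
    then show ?thesis using less.prems by (auto intro: pres_rel.refl)
  next
    case False
    then obtain p q k where ks: "ks = p @ k # k # q" unfolding X_reduced_def by blast
    with less.prems have "(ks, p @ q) \<in> X.rel"
      using pres_rel.rel[of "[k, k]" "[]" X_rels p Xgens q] by (auto simp: X_rels_def Xgens_def)
    moreover obtain ks' where "X_reduced ks'" "set ks' \<subseteq> set (p @ q)" "(p @ q, ks') \<in> X.rel"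
      using less.hyps[of "p @ q"] less.prems ks by auto
    ultimately show ?thesis using ks by (auto intro: pres_rel.trans)
  qed
qed

lemma X_rel_word_abics: "(xs, js) \<in> X.rel \<Longrightarrow> (word_abics xs, word_abics js) \<in> Pi2.rel"
proof (induction rule: pres_rel.induct)
  case (refl w)
  then show ?case by (simp add: pres_rel.refl)
next
  case (rel l r u v)
  then obtain k where "1 \<le> k" "l = [k, k]" "r = []" by (auto simp: X_rels_def)
  then show ?case using relator_Pi2_rel[of k "word_abics u" "word_abics v"] by (simp add: relator_def)
qed (auto intro: pres_rel.sym pres_rel.trans)

lemma word_abics_inj: "word_abics xs = word_abics js \<Longrightarrow> xs = js"
proof (induction xs arbitrary: js)
  case Nil
  then show ?case by (cases js) (auto simp: word_abic_def)
next
  case (Cons i xs)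
  then show ?case
  proof (cases js)
    case (Cons j js')
    with Cons.prems have "replicate i gb @ gc # word_abics xs = replicate j gb @ gc # word_abics js'"
      by (simp add: word_abic_def)
    from replicate_gb_Cons_eq[OF this] Cons Cons.IH show ?thesis by auto
  qed (use Cons in \<open>auto simp: word_abic_def\<close>)
qed

lemma word_abics_split_at_ga:
  "word_abics ks = x @ ga # w \<Longrightarrow>
    \<exists>ks1 ks2. ks = ks1 @ ks2 \<and> x = word_abics ks1 \<and> ga # w = word_abics ks2"
proof (induction ks arbitrary: x)
  case (Cons k ks)
  show ?case
  proof (cases x)
    case Nil
    then show ?thesis using Cons.prems by (intro exI[of _ "[]"] exI[of _ "k # ks"]) auto
  next
    case (Cons z x')
    with Cons.prems have "replicate k gb @ gc # word_abics ks = x' @ ga # w" "z = ga"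
      by (auto simp: word_abic_def)
    moreover from replicate_gb_gc_eq_append_ga[OF this(1)] obtain x''
      where "x' = replicate k gb @ gc # x''" "word_abics ks = x'' @ ga # w" by blast
    moreover from Cons.IH[OF this(2)] obtain ks1 ks2
      where "ks = ks1 @ ks2" "x'' = word_abics ks1" "ga # w = word_abics ks2" by blast
    ultimately show ?thesis using Cons
      by (intro exI[of _ "k # ks1"] exI[of _ ks2]) (auto simp: word_abic_def)
  qed
qed simp

lemma word_abics_eq_word_abic_append:
  "word_abics ks = word_abic j @ y \<Longrightarrow> \<exists>ks'. ks = j # ks' \<and> y = word_abics ks'"
proof (cases ks)
  case (Cons k ks')
  moreover assume "word_abics ks = word_abic j @ y"
  ultimately have "replicate k gb @ gc # word_abics ks' = replicate j gb @ gc # y"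
    by (simp add: word_abic_def)
  from replicate_gb_Cons_eq[OF this] Cons show ?thesis by auto
qed (simp add: word_abic_def)

lemma Pi2_reduced_word_abics: "X_reduced ks \<Longrightarrow> Pi2_reduced (word_abics ks)"
  unfolding Pi2_reduced_def
proof
  assume "X_reduced ks" and "\<exists>x y i. 1 \<le> i \<and> word_abics ks = x @ relator i @ y"
  then obtain x y j where "word_abics ks = x @ relator j @ y" by blast
  moreover have relator: "relator j = ga # tl (relator j)" by (simp add: relator_def word_abic_def)
  ultimately have "word_abics ks = x @ ga # (tl (relator j) @ y)" by (metis append_Cons)
  from word_abics_split_at_ga[OF this] obtain ks1 ks2
    where ks: "ks = ks1 @ ks2" "ga # (tl (relator j) @ y) = word_abics ks2" by blast
  have "word_abics ks2 = word_abic j @ word_abic j @ y"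
    using ks(2) relator by (simp only: relator_def append_Cons[symmetric] append.assoc)
  from word_abics_eq_word_abic_append[OF this] obtain ks3
    where ks3: "ks2 = j # ks3" "word_abic j @ y = word_abics ks3" by blast
  from word_abics_eq_word_abic_append[OF ks3(2)[symmetric]] obtain ks4 where "ks3 = j # ks4" by blast
  with ks ks3 have "ks = ks1 @ j # j # ks4" by simp
  with \<open>X_reduced ks\<close> show False unfolding X_reduced_def by blast
qed

lemma X_reduced_eq_if_Pi2_rel:
  assumes "X_reduced xs" "X_reduced js" "(word_abics xs, word_abics js) \<in> Pi2.rel"
  shows "xs = js"
proof -
  have "Pi2_nf (word_abics xs) = Pi2_nf (word_abics js)"
    using assms(3) by (simp add: Pi2_rel_iff)
  with assms(1,2) show ?thesis
    by (simp add: Pi2_nf_reduced Pi2_reduced_word_abics word_abics_inj)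
qed

lemma Pi2_class_word_abics_eq_iff:
  assumes "xs \<in> lists Xgens" "js \<in> lists Xgens"
  shows "Pi2.cls (word_abics xs) = Pi2.cls (word_abics js) \<longleftrightarrow> X.cls xs = X.cls js"
proof
  assume "Pi2.cls (word_abics xs) = Pi2.cls (word_abics js)"
  then have rel: "(word_abics xs, word_abics js) \<in> Pi2.rel" by (simp add: Pi2.pres_class_eq_iff)
  obtain xs' where xs': "X_reduced xs'" "(xs, xs') \<in> X.rel"
    using X_reduced_exists[OF assms(1)] by blast
  obtain js' where js': "X_reduced js'" "(js, js') \<in> X.rel"
    using X_reduced_exists[OF assms(2)] by blast
  have "(word_abics xs', word_abics js') \<in> Pi2.rel"
    using pres_rel.trans[OF pres_rel.trans[OF pres_rel.sym[OF X_rel_word_abics[OF xs'(2)]] rel]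
        X_rel_word_abics[OF js'(2)]] .
  then have "xs' = js'" by (rule X_reduced_eq_if_Pi2_rel[OF xs'(1) js'(1)])
  have "(xs, js) \<in> X.rel"
    using pres_rel.trans[OF xs'(2) pres_rel.sym[OF js'(2)[folded \<open>xs' = js'\<close>]]] .
  then show "X.cls xs = X.cls js" using assms by (simp add: X.pres_class_eq_iff)
next
  assume "X.cls xs = X.cls js"
  then have "(xs, js) \<in> X.rel" using assms by (simp add: X.pres_class_eq_iff)
  from X_rel_word_abics[OF this] show "Pi2.cls (word_abics xs) = Pi2.cls (word_abics js)"
    by (simp add: Pi2.pres_class_eq_iff)
qed

section \<open>The isomorphism and infinite generation\<close>

definition Pi2_unit_index :: "gen list set \<Rightarrow> nat list set" where
  "Pi2_unit_index U = X.cls (SOME ks. ks \<in> lists Xgens \<and> U = Pi2.cls (word_abics ks))"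

lemma Pi2_unit_index_word_abics:
  assumes "ks \<in> lists Xgens"
  shows "Pi2_unit_index (Pi2.cls (word_abics ks)) = X.cls ks"
proof -
  let ?P = "\<lambda>js. js \<in> lists Xgens \<and> Pi2.cls (word_abics ks) = Pi2.cls (word_abics js)"
  have "?P (SOME js. ?P js)" by (rule someI[of ?P ks]) (use assms in simp)
  then show ?thesis
    unfolding Pi2_unit_index_def using Pi2_class_word_abics_eq_iff[OF assms] by metis
qed

lemma Pi2_unit_index_iso: "Pi2_unit_index \<in> iso (units_of Pi2) FreeProdZ2"
proof (rule isoI)
  have carrier: "carrier (units_of Pi2) = (\<lambda>ks. Pi2.cls (word_abics ks)) ` lists Xgens"
    by (simp add: units_of_carrier Units_Pi2)
  show "Pi2_unit_index \<in> hom (units_of Pi2) FreeProdZ2"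
  proof (rule homI)
    fix U V assume "U \<in> carrier (units_of Pi2)" "V \<in> carrier (units_of Pi2)"
    then obtain ks js where "ks \<in> lists Xgens" "js \<in> lists Xgens"
      "U = Pi2.cls (word_abics ks)" "V = Pi2.cls (word_abics js)"
      by (auto simp: carrier)
    then show "Pi2_unit_index U \<in> carrier FreeProdZ2"
      and "Pi2_unit_index (U \<otimes>\<^bsub>units_of Pi2\<^esub> V) =
        Pi2_unit_index U \<otimes>\<^bsub>FreeProdZ2\<^esub> Pi2_unit_index V"
      by (simp_all add: units_of_mult mult_Pi2 Pi2_unit_index_word_abics carrier_FreeProdZ2
          mult_FreeProdZ2 flip: word_abics_simps(3))
  qed
  show "bij_betw Pi2_unit_index (carrier (units_of Pi2)) (carrier FreeProdZ2)"
  proof (rule bij_betw_imageI)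
    show "inj_on Pi2_unit_index (carrier (units_of Pi2))"
      by (auto simp: carrier inj_on_def Pi2_unit_index_word_abics Pi2_class_word_abics_eq_iff)
    show "Pi2_unit_index ` carrier (units_of Pi2) = carrier FreeProdZ2"
      by (auto simp: carrier carrier_FreeProdZ2 Pi2_unit_index_word_abics image_image
          cong: image_cong)
  qed
qed

lemma word_abics_rev_cancel:
  "ks \<in> lists Xgens \<Longrightarrow> Pi2.cls (word_abics (rev ks) @ word_abics ks) = \<one>\<^bsub>Pi2\<^esub>"
proof (induction ks)
  case (Cons k ks)
  then have "(word_abics (rev ks) @ (word_abic k @ word_abic k) @ word_abics ks,
      word_abics (rev ks) @ [] @ word_abics ks) \<in> Pi2.rel"
    using relator_Pi2_rel[of k] by (simp add: relator_def Xgens_def)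
  then have "Pi2.cls (word_abics (rev (k # ks)) @ word_abics (k # ks)) =
      Pi2.cls (word_abics (rev ks) @ word_abics ks)"
    by (simp add: Pi2.pres_class_eq_iff)
  with Cons show ?case by simp
qed (simp add: one_Pi2)

definition Pi2_units_upto :: "nat \<Rightarrow> gen list set set" where
  "Pi2_units_upto N = (\<lambda>ks. Pi2.cls (word_abics ks)) ` {ks \<in> lists Xgens. set ks \<subseteq> {..N}}"

lemma generate_subset_Pi2_units_upto:
  assumes "F \<subseteq> Pi2_units_upto N"
  shows "generate (units_of Pi2) F \<subseteq> Pi2_units_upto N"
proof
  fix U assume "U \<in> generate (units_of Pi2) F"
  then show "U \<in> Pi2_units_upto N"
  proof (induction rule: generate.induct)
    case one
    then show ?case by (auto simp: Pi2_units_upto_def units_of_one one_Pi2 image_iff intro: exI[of _ "[]"])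
  next
    case (incl U)
    then show ?case using assms by blast
  next
    case (inv U)
    with assms have "U \<in> Pi2_units_upto N" by blast
    then obtain ks where ks: "ks \<in> lists Xgens" "set ks \<subseteq> {..N}" "U = Pi2.cls (word_abics ks)"
      unfolding Pi2_units_upto_def by blast
    have "rev ks \<in> lists Xgens" using ks(1) by (simp add: in_lists_conv_set)
    then have "inv\<^bsub>units_of Pi2\<^esub> U = Pi2.cls (word_abics (rev ks))"
      using ks word_abics_rev_cancel[OF ks(1)] word_abics_Unit
      by (intro group.inv_equality monoid.units_group monoid_Pi2)
        (auto simp: units_of_mult units_of_one units_of_carrier mult_Pi2 word_abics_Unit)
    with ks \<open>rev ks \<in> lists Xgens\<close> show ?case
      unfolding Pi2_units_upto_def by (intro image_eqI[of _ _ "rev ks"]) auto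
  next
    case (eng U V)
    then obtain ks js where "ks \<in> lists Xgens" "set ks \<subseteq> {..N}" "U = Pi2.cls (word_abics ks)"
      "js \<in> lists Xgens" "set js \<subseteq> {..N}" "V = Pi2.cls (word_abics js)"
      unfolding Pi2_units_upto_def by blast
    then show ?case
      unfolding Pi2_units_upto_def units_of_mult
      by (intro image_eqI[of _ _ "ks @ js"]) (auto simp: mult_Pi2)
  qed
qed

lemma Pi2_units_upto_mono: "M \<le> M' \<Longrightarrow> Pi2_units_upto M \<subseteq> Pi2_units_upto M'"
  unfolding Pi2_units_upto_def by (intro image_mono) auto

lemma finite_Units_subset_Pi2_units_upto:
  assumes "finite F" "F \<subseteq> Units Pi2"
  shows "\<exists>N. F \<subseteq> Pi2_units_upto N"
  using assms
proof (induction rule: finite_induct)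
  case (insert U F)
  then obtain N where N: "F \<subseteq> Pi2_units_upto N" by auto
  from insert.prems obtain ks where ks: "ks \<in> lists Xgens" "U = Pi2.cls (word_abics ks)"
    by (auto simp: Units_Pi2)
  have "set ks \<subseteq> {..sum_list ks}" using member_le_sum_list by fastforce
  with ks have "U \<in> Pi2_units_upto (sum_list ks)"
    unfolding Pi2_units_upto_def by auto
  with N Pi2_units_upto_mono[of N "max N (sum_list ks)"]
    Pi2_units_upto_mono[of "sum_list ks" "max N (sum_list ks)"]
  show ?case by auto
qed simp

lemma word_abic_notin_Pi2_units_upto: "Pi2.cls (word_abic (Suc N)) \<notin> Pi2_units_upto N"
proof
  assume "Pi2.cls (word_abic (Suc N)) \<in> Pi2_units_upto N"
  then obtain ks where ks: "ks \<in> lists Xgens" "set ks \<subseteq> {..N}"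
    "Pi2.cls (word_abics [Suc N]) = Pi2.cls (word_abics ks)"
    unfolding Pi2_units_upto_def by auto
  obtain ks' where ks': "X_reduced ks'" "set ks' \<subseteq> set ks" "(ks, ks') \<in> X.rel"
    using X_reduced_exists[OF ks(1)] by blast
  have "(word_abics [Suc N], word_abics ks') \<in> Pi2.rel"
    using ks(3) X_rel_word_abics[OF ks'(3)]
    by (simp add: Pi2.pres_class_eq_iff) (rule pres_rel.trans)
  then have "[Suc N] = ks'" by (rule X_reduced_eq_if_Pi2_rel[OF X_reduced_singleton ks'(1)])
  with ks(2) ks'(2) show False by auto
qed

theorem mainTheorem9:
  shows "(\<exists>h. h \<in> iso (units_of Pi2) FreeProdZ2 \<and>
            (\<forall>i\<ge>1. pres_class UNIV Pi2_rels (word_abic i) \<in> Units Pi2 \<and>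
                    h (pres_class UNIV Pi2_rels (word_abic i)) = pres_class Xgens X_rels [i]))
       \<and> \<not> (\<exists>F. finite F \<and> F \<subseteq> carrier (units_of Pi2) \<and>
               generate (units_of Pi2) F = carrier (units_of Pi2))"
proof (intro conjI exI[of _ Pi2_unit_index] allI impI notI)
  show "Pi2_unit_index \<in> iso (units_of Pi2) FreeProdZ2" by (rule Pi2_unit_index_iso)
  fix i :: nat assume "1 \<le> i"
  then have "[i] \<in> lists Xgens" by (simp add: Xgens_def)
  from Pi2_unit_index_word_abics[OF this] word_abics_Unit[OF this]
  show "Pi2.cls (word_abic i) \<in> Units Pi2" "Pi2_unit_index (Pi2.cls (word_abic i)) = X.cls [i]"
    by simp_all
next
  assume "\<exists>F. finite F \<and> F \<subseteq> carrier (units_of Pi2) \<and>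
    generate (units_of Pi2) F = carrier (units_of Pi2)"
  then obtain F where F: "finite F" "F \<subseteq> Units Pi2" "generate (units_of Pi2) F = Units Pi2"
    by (auto simp: units_of_carrier)
  then obtain N where "Units Pi2 \<subseteq> Pi2_units_upto N"
    using finite_Units_subset_Pi2_units_upto generate_subset_Pi2_units_upto by metis
  with word_abic_Unit[of "Suc N"] word_abic_notin_Pi2_units_upto show False by auto
qed

end
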